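(* Consider the risk-neutral constrained learning problem (CL): minimize $\mathbb E_{\mathcal D_0}\{\ell_0(\boldsymbol f(\boldsymbol X_0),Y_0)\}$ over $\boldsymbol f\in\mathcal F$ subject to $\mathbb E_{\mathcal D_i}\{\ell_i(\boldsymbol f(\boldsymbol X_i),Y_i)\}\le c_i$ for $i=1,\dots,m$. Suppose that $\mathcal D_{\boldsymbol X_0}$ is nonatomic; that $\mathcal D_{\boldsymbol X_i}$ is absolutely continuous with respect to $\mathcal D_{\boldsymbol X_0}$ for every $i=1,\dots,m$; that $(\boldsymbol x,y)\mapsto\ell_i(\boldsymbol f(\boldsymbol x),y)$ belongs to $\mathcal L_1(\mathcal D_i,\mathbb R)$ for every $\boldsymbol f\in\mathcal F$ and $i=0,\dots,m$; that $\mathcal F$ is decomposable; and that Slater's constraint qualification holds, i.e., there exists $\boldsymbol f\in\mathcal F$ with $\mathbb E_{\mathcal D_i}\{\ell_i(\boldsymbol f(\boldsymbol X_i),Y_i)\}<c_i$ for all $i=1,\dots,m$. Then (CL) exhibits strong duality: $P^*=D^*$ and there exists $\boldsymbol\lambda^*\in\mathbb R^m_+$ with $d(\boldsymbol\lambda^* )=D^*$. (No closedness or convexity of $\mathcal F$, no boundedness of the range of $Y_i$, and no continuity of $\ell_i$ is assumed; the statement covers both classification and regression.)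
   Context: Let $(\Omega,\mathscr F,\mu)$ be a complete probability space. For $i\in\{0,1,\dots,m\}$, let $(\boldsymbol X_i,Y_i):\Omega\to\mathbb R^d\times\mathbb R$ be random pairs with Borel distributions $\mathcal D_i$ on $\mathbb R^d\times\mathbb R$; $\mathcal D_{\boldsymbol X_i}$ denotes the marginal of $\boldsymbol X_i$. The loss functions $\ell_i:\mathbb R^k\times\mathbb R\to\mathbb R_+$ are arbitrary (possibly nonconvex or discontinuous) Borel functions, $c_i\in\mathbb R$, and $\mathcal F$ is a set of measurable functions $\boldsymbol f:\mathbb R^d\to\mathbb R^k$. A measure $P$ is nonatomic if every event $E$ with $P(E)>0$ contains an event $E'$ with $P(E)>P(E')>0$. A set $\mathcal F$ is decomposable if for all $\boldsymbol f,\boldsymbol g\in\mathcal F$ and every Borel set $E\subseteq\mathbb R^d$, $\boldsymbol f\mathbf 1_E+\boldsymbol g\mathbf 1_{E^c}\in\mathcal F$. Duality: writing $J_i(\boldsymbol f)=\mathbb E_{\mathcal D_i}\{\ell_i(\boldsymbol f(\boldsymbol X_i),Y_i)\}$, $P^*$ is the optimal value of (CL), the Lagrangian is $L(\boldsymbol f,\boldsymbol\lambda)=J_0(\boldsymbol f)+\sum_{i=1}^m\lambda_i(J_i(\boldsymbol f)-c_i)$, the dual function is $d(\boldsymbol\lambda)=\inf_{\boldsymbol f\in\mathcal F}L(\boldsymbol f,\boldsymbol\lambda)$, and $D^*=\sup_{\boldsymbol\lambda\in\mathbb R^m_+}d(\boldsymbol\lambda)$. *)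

theory Defs
  imports "HOL-Probability.Probability"
begin

definition nonatomic :: "'a measure \<Rightarrow> bool" where
  "nonatomic P \<longleftrightarrow> (\<forall>E\<in>sets P. measure P E > 0 \<longrightarrow>
      (\<exists>E'\<in>sets P. E' \<subseteq> E \<and> measure P E > measure P E' \<and> measure P E' > 0))"

definition decomposable :: "('a::topological_space \<Rightarrow> 'b) set \<Rightarrow> bool" where
  "decomposable F \<longleftrightarrow> (\<forall>f\<in>F. \<forall>g\<in>F. \<forall>E\<in>sets borel.
      (\<lambda>x. if x \<in> E then f x else g x) \<in> F)"

definition marginal_X :: "('a::topological_space \<times> 'b) measure \<Rightarrow> 'a measure" where
  "marginal_X D = distr D borel fst"

definition risk :: "('d \<times> real) measure \<Rightarrow> ('k \<Rightarrow> real \<Rightarrow> real) \<Rightarrow> ('d \<Rightarrow> 'k) \<Rightarrow> real" where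
  "risk D l f = (\<integral>p. l (f (fst p)) (snd p) \<partial>D)"

definition primal_value ::
  "nat \<Rightarrow> (nat \<Rightarrow> ('d \<times> real) measure) \<Rightarrow> (nat \<Rightarrow> 'k \<Rightarrow> real \<Rightarrow> real) \<Rightarrow> (nat \<Rightarrow> real)
     \<Rightarrow> ('d \<Rightarrow> 'k) set \<Rightarrow> real" where
  "primal_value m D l c F =
     Inf {risk (D 0) (l 0) f | f. f \<in> F \<and> (\<forall>i\<in>{1..m}. risk (D i) (l i) f \<le> c i)}"

definition lagrangian ::
  "nat \<Rightarrow> (nat \<Rightarrow> ('d \<times> real) measure) \<Rightarrow> (nat \<Rightarrow> 'k \<Rightarrow> real \<Rightarrow> real) \<Rightarrow> (nat \<Rightarrow> real)
     \<Rightarrow> ('d \<Rightarrow> 'k) \<Rightarrow> (nat \<Rightarrow> real) \<Rightarrow> real" where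
  "lagrangian m D l c f lam =
     risk (D 0) (l 0) f + (\<Sum>i=1..m. lam i * (risk (D i) (l i) f - c i))"

definition dual_function ::
  "nat \<Rightarrow> (nat \<Rightarrow> ('d \<times> real) measure) \<Rightarrow> (nat \<Rightarrow> 'k \<Rightarrow> real \<Rightarrow> real) \<Rightarrow> (nat \<Rightarrow> real)
     \<Rightarrow> ('d \<Rightarrow> 'k) set \<Rightarrow> (nat \<Rightarrow> real) \<Rightarrow> real" where
  "dual_function m D l c F lam = Inf {lagrangian m D l c f lam | f. f \<in> F}"

definition dual_value ::
  "nat \<Rightarrow> (nat \<Rightarrow> ('d \<times> real) measure) \<Rightarrow> (nat \<Rightarrow> 'k \<Rightarrow> real \<Rightarrow> real) \<Rightarrow> (nat \<Rightarrow> real)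
     \<Rightarrow> ('d \<Rightarrow> 'k) set \<Rightarrow> real" where
  "dual_value m D l c F =
     Sup {dual_function m D l c F lam | lam. \<forall>i\<in>{1..m}. 0 \<le> lam i}"

end

theory Submission
  imports Defs
begin

text \<open>The problem is not convex, but it is convex enough. If f, g \<in> F and 0 \<le> t \<le> 1, the
  risk differences between f and g, localized to events of the feature space, are finitely
  many charges absolutely continuous with respect to the nonatomic feature marginal of D 0.
  Lyapunov's convexity theorem yields an event E on which all of them take the fraction t of
  their total, and by decomposability the function equal to f on E and to g off E lies in F and
  has exactly the convex combination of the risk vectors of f and g. So the set of risk vectors
  is convex, and the finite-dimensional Lagrange multiplier theorem under Slater's condition
  produces a multiplier whose dual value is the primal value.\<close>

section \<open>Lagrange multipliers for convexlike sets\<close>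

text \<open>S is convexlike in the coordinates I when S + [0,\<infinity>) ^ I is convex (Ky Fan).\<close>

definition convexlike :: "'i set \<Rightarrow> ('i \<Rightarrow> real) set \<Rightarrow> bool" where
  "convexlike I S \<longleftrightarrow> (\<forall>v\<in>S. \<forall>w\<in>S. \<forall>t. 0 \<le> t \<longrightarrow> t \<le> 1 \<longrightarrow>
      (\<exists>u\<in>S. \<forall>i\<in>I. u i \<le> t * v i + (1 - t) * w i))"

lemma convexlikeD:
  assumes "convexlike I S" "v \<in> S" "w \<in> S" "0 \<le> t" "t \<le> 1"
  shows "\<exists>u\<in>S. \<forall>i\<in>I. u i \<le> t * v i + (1 - t) * w i"
  using assms unfolding convexlike_def by blast

lemma convexlike_subset: "convexlike I S \<Longrightarrow> J \<subseteq> I \<Longrightarrow> convexlike J S"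
  unfolding convexlike_def by blast

lemma convexlike_restrict:
  assumes S: "convexlike I S" and "J \<subseteq> I"
  shows "convexlike I {v\<in>S. \<forall>i\<in>J. v i \<le> c i}"
  unfolding convexlike_def
proof (intro ballI allI impI)
  fix v w and t :: real
  assume v: "v \<in> {v\<in>S. \<forall>i\<in>J. v i \<le> c i}" and w: "w \<in> {v\<in>S. \<forall>i\<in>J. v i \<le> c i}"
    and t: "0 \<le> t" "t \<le> 1"
  obtain u where u: "u \<in> S" "\<And>i. i \<in> I \<Longrightarrow> u i \<le> t * v i + (1 - t) * w i"
    using convexlikeD[OF S _ _ t] v w by (metis (no_types, lifting) mem_Collect_eq)
  have "u i \<le> c i" if i: "i \<in> J" for i
  proof -
    have "u i \<le> t * v i + (1 - t) * w i" using u(2) i \<open>J \<subseteq> I\<close> by blast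
    also have "\<dots> \<le> t * c i + (1 - t) * c i"
      using v w i t by (intro add_mono mult_left_mono) auto
    finally show ?thesis by (simp add: algebra_simps)
  qed
  then show "\<exists>u\<in>{v\<in>S. \<forall>i\<in>J. v i \<le> c i}. \<forall>i\<in>I. u i \<le> t * v i + (1 - t) * w i"
    using u by blast
qed

lemma convexlike_image_penalty:
  assumes S: "convexlike I S" and "0 \<in> I" "j \<in> I" "0 \<le> \<mu>"
  shows "convexlike I ((\<lambda>v. v(0 := v 0 + \<mu> * (v j - b))) ` S)"
  unfolding convexlike_def
proof (intro ballI allI impI)
  let ?g = "\<lambda>v. v(0 := v 0 + \<mu> * (v j - b))"
  fix v' w' and t :: real
  assume "v' \<in> ?g ` S" "w' \<in> ?g ` S" and t: "0 \<le> t" "t \<le> 1"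
  then obtain v w where vw: "v \<in> S" "w \<in> S" "v' = ?g v" "w' = ?g w" by blast
  obtain u where u: "u \<in> S" "\<And>i. i \<in> I \<Longrightarrow> u i \<le> t * v i + (1 - t) * w i"
    using convexlikeD[OF S vw(1,2) t] by blast
  have "?g u i \<le> t * v' i + (1 - t) * w' i" if i: "i \<in> I" for i
  proof (cases "i = 0")
    case True
    have "\<mu> * (u j - b) \<le> \<mu> * (t * v j + (1 - t) * w j - b)"
      using u(2)[OF \<open>j \<in> I\<close>] \<open>0 \<le> \<mu>\<close> by (intro mult_left_mono) auto
    then show ?thesis
      using u(2)[OF \<open>0 \<in> I\<close>] True unfolding vw by (simp add: algebra_simps)
  next
    case False
    then show ?thesis using u(2)[OF i] unfolding vw by simp
  qed
  then show "\<exists>u\<in>?g ` S. \<forall>i\<in>I. u i \<le> t * v' i + (1 - t) * w' i"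
    using u(1) by blast
qed

text \<open>In the (v j, v 0)-plane, the slopes from (cj, p) to the points of T to the right of cj
  lie below the slopes to the points to its left; any slope in between is a multiplier.\<close>
lemma convexlike_slope_le:
  assumes T: "convexlike {0, j} T"
    and lb: "\<forall>v\<in>T. v j \<le> cj \<longrightarrow> p \<le> v 0"
    and v: "v \<in> T" "cj < v j" and w: "w \<in> T" "w j < cj"
  shows "(p - v 0) / (v j - cj) \<le> (w 0 - p) / (cj - w j)"
proof -
  define t where "t = (cj - w j) / (v j - w j)"
  have t: "0 \<le> t" "t \<le> 1" and t_scale: "t * (v j - w j) = cj - w j"
    using v w unfolding t_def by (auto simp: field_simps)
  obtain u where u: "u \<in> T" "\<forall>i\<in>{0, j}. u i \<le> t * v i + (1 - t) * w i"
    using convexlikeD[OF T v(1) w(1) t] by blast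
  have "t * v j + (1 - t) * w j = w j + t * (v j - w j)"
    by (simp add: algebra_simps)
  then have "t * v j + (1 - t) * w j = cj"
    using t_scale by simp
  then have "p \<le> u 0"
    using lb u by simp
  then have "p \<le> t * v 0 + (1 - t) * w 0"
    using u(2) by simp
  then have "(v j - w j) * p \<le> (v j - w j) * (t * v 0 + (1 - t) * w 0)"
    using v w by (intro mult_left_mono) auto
  also have "\<dots> = (t * (v j - w j)) * v 0 + ((v j - w j) - t * (v j - w j)) * w 0"
    by (simp add: algebra_simps)
  also have "\<dots> = (cj - w j) * v 0 + (v j - cj) * w 0"
    using t_scale by simp
  finally have "(cj - w j) * (p - v 0) \<le> (v j - cj) * (w 0 - p)"
    by (simp add: algebra_simps)
  then show ?thesis using v w by (simp add: divide_simps mult.commute)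
qed

lemma convexlike_multiplier_single:
  assumes T: "convexlike {0, j} T" and s: "s \<in> T" "s j < cj"
    and lb: "\<forall>v\<in>T. v j \<le> cj \<longrightarrow> p \<le> v 0"
  shows "\<exists>\<mu>\<ge>0. \<forall>v\<in>T. p \<le> v 0 + \<mu> * (v j - cj)"
proof -
  define R where "R = {(w 0 - p) / (cj - w j) | w. w \<in> T \<and> w j < cj}"
  have R_nonneg: "0 \<le> r" if r: "r \<in> R" for r
  proof -
    obtain w where "w \<in> T" "w j < cj" "r = (w 0 - p) / (cj - w j)"
      using r unfolding R_def by blast
    then show ?thesis using lb by simp
  qed
  have R: "R \<noteq> {}" "bdd_below R"
    using s R_nonneg unfolding R_def by (blast, meson bdd_belowI)
  show ?thesis
  proof (intro exI[of _ "Inf R"] conjI ballI)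
    show "0 \<le> Inf R" using R R_nonneg by (intro cInf_greatest) auto
  next
    fix v assume v: "v \<in> T"
    consider "v j < cj" | "v j = cj" | "cj < v j" by linarith
    then show "p \<le> v 0 + Inf R * (v j - cj)"
    proof cases
      case 1
      then have "Inf R \<le> (v 0 - p) / (cj - v j)"
        using R v by (intro cInf_lower) (auto simp: R_def)
      then have "Inf R * (cj - v j) \<le> v 0 - p" using 1 by (simp add: divide_simps)
      then show ?thesis by (simp add: algebra_simps)
    next
      case 2
      then show ?thesis using lb v by simp
    next
      case 3
      have "(p - v 0) / (v j - cj) \<le> Inf R"
        using R convexlike_slope_le[OF T lb v 3] by (intro cInf_greatest) (auto simp: R_def)
      then have "p - v 0 \<le> Inf R * (v j - cj)" using 3 by (simp add: divide_simps)
      then show ?thesis by simp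
    qed
  qed
qed

lemma convexlike_multiplier_last:
  assumes S: "convexlike {..Suc m} S" and s: "s \<in> S" "\<forall>i\<in>{1..Suc m}. s i < c i"
    and lb: "\<forall>v\<in>S. (\<forall>i\<in>{1..Suc m}. v i \<le> c i) \<longrightarrow> p \<le> v 0"
  shows "\<exists>\<mu>\<ge>0. \<forall>v\<in>S. (\<forall>i\<in>{1..m}. v i \<le> c i) \<longrightarrow> p \<le> v 0 + \<mu> * (v (Suc m) - c (Suc m))"
proof -
  define T where "T = {v\<in>S. \<forall>i\<in>{1..m}. v i \<le> c i}"
  have "convexlike {..Suc m} T"
    unfolding T_def using S by (rule convexlike_restrict) auto
  then have T: "convexlike {0, Suc m} T" by (rule convexlike_subset) auto
  have sT: "s \<in> T" "s (Suc m) < c (Suc m)"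
    using s unfolding T_def by (auto intro: less_imp_le)
  have lbT: "\<forall>v\<in>T. v (Suc m) \<le> c (Suc m) \<longrightarrow> p \<le> v 0"
  proof (intro ballI impI)
    fix v assume v: "v \<in> T" "v (Suc m) \<le> c (Suc m)"
    then have "\<forall>i\<in>{1..Suc m}. v i \<le> c i" unfolding T_def by (auto simp: le_Suc_eq)
    then show "p \<le> v 0" using lb v unfolding T_def by blast
  qed
  show ?thesis
    using convexlike_multiplier_single[OF T sT lbT] unfolding T_def by blast
qed

text \<open>Coordinate 0 is the objective and coordinates 1..m are the constraints. The multipliers are
  found one constraint at a time, each one absorbed into the objective.\<close>
theorem convexlike_lagrange_multipliers:
  fixes S :: "(nat \<Rightarrow> real) set"
  assumes "convexlike {..m} S"
    and "\<exists>s\<in>S. \<forall>i\<in>{1..m}. s i < c i"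
    and "\<forall>v\<in>S. (\<forall>i\<in>{1..m}. v i \<le> c i) \<longrightarrow> p \<le> v 0"
  shows "\<exists>lam. (\<forall>i\<in>{1..m}. 0 \<le> lam i) \<and> (\<forall>v\<in>S. p \<le> v 0 + (\<Sum>i=1..m. lam i * (v i - c i)))"
  using assms
proof (induction m arbitrary: S)
  case 0
  then show ?case by auto
next
  case (Suc m)
  obtain s where s: "s \<in> S" "\<forall>i\<in>{1..Suc m}. s i < c i" using Suc.prems(2) by blast
  obtain \<mu> where \<mu>: "0 \<le> \<mu>"
    "\<forall>v\<in>S. (\<forall>i\<in>{1..m}. v i \<le> c i) \<longrightarrow> p \<le> v 0 + \<mu> * (v (Suc m) - c (Suc m))"
    using convexlike_multiplier_last[OF Suc.prems(1) s Suc.prems(3)] by blast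
  define g where "g = (\<lambda>v::nat \<Rightarrow> real. v(0 := v 0 + \<mu> * (v (Suc m) - c (Suc m))))"
  have "\<exists>lam. (\<forall>i\<in>{1..m}. 0 \<le> lam i) \<and> (\<forall>v\<in>g ` S. p \<le> v 0 + (\<Sum>i=1..m. lam i * (v i - c i)))"
  proof (rule Suc.IH)
    have "convexlike {..Suc m} (g ` S)"
      unfolding g_def using Suc.prems(1) by (rule convexlike_image_penalty) (simp_all add: \<mu>(1))
    then show "convexlike {..m} (g ` S)" by (rule convexlike_subset) auto
    show "\<exists>s\<in>g ` S. \<forall>i\<in>{1..m}. s i < c i"
      using s by (intro bexI[of _ "g s"] imageI) (auto simp: g_def)
    show "\<forall>v\<in>g ` S. (\<forall>i\<in>{1..m}. v i \<le> c i) \<longrightarrow> p \<le> v 0"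
      using \<mu>(2) by (auto simp: g_def)
  qed
  then obtain lam where lam: "\<forall>i\<in>{1..m}. 0 \<le> lam i"
    "\<forall>v\<in>g ` S. p \<le> v 0 + (\<Sum>i=1..m. lam i * (v i - c i))"
    by blast
  show ?case
  proof (intro exI[of _ "lam(Suc m := \<mu>)"] conjI ballI)
    show "0 \<le> (lam(Suc m := \<mu>)) i" if "i \<in> {1..Suc m}" for i
      using that lam(1) \<mu>(1) by (auto simp: le_Suc_eq)
  next
    fix v assume "v \<in> S"
    then have "p \<le> g v 0 + (\<Sum>i=1..m. lam i * (g v i - c i))" using lam(2) by blast
    also have "(\<Sum>i=1..m. lam i * (g v i - c i)) = (\<Sum>i=1..m. (lam(Suc m := \<mu>)) i * (v i - c i))"
      by (intro sum.cong) (auto simp: g_def)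
    finally show "p \<le> v 0 + (\<Sum>i=1..Suc m. (lam(Suc m := \<mu>)) i * (v i - c i))"
      by (simp add: g_def algebra_simps)
  qed
qed

section \<open>Absolutely continuous charges\<close>

definition abs_cont_charge :: "'a measure \<Rightarrow> ('a set \<Rightarrow> real) \<Rightarrow> bool" where
  "abs_cont_charge M \<nu> \<longleftrightarrow>
     (\<forall>A\<in>sets M. \<forall>B\<in>sets M. A \<inter> B = {} \<longrightarrow> \<nu> (A \<union> B) = \<nu> A + \<nu> B) \<and>
     (\<forall>e>0. \<exists>d>0. \<forall>E\<in>sets M. measure M E < d \<longrightarrow> \<bar>\<nu> E\<bar> < e)"

lemma charge_Un:
  "abs_cont_charge M \<nu> \<Longrightarrow> A \<in> sets M \<Longrightarrow> B \<in> sets M \<Longrightarrow> A \<inter> B = {} \<Longrightarrow>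
    \<nu> (A \<union> B) = \<nu> A + \<nu> B"
  unfolding abs_cont_charge_def by blast

lemma charge_empty: "abs_cont_charge M \<nu> \<Longrightarrow> \<nu> {} = 0"
  using charge_Un[of M \<nu> "{}" "{}"] by simp

lemma charge_Diff:
  assumes "abs_cont_charge M \<nu>" "A \<in> sets M" "B \<in> sets M" "B \<subseteq> A"
  shows "\<nu> (A - B) = \<nu> A - \<nu> B"
proof -
  have "\<nu> ((A - B) \<union> B) = \<nu> (A - B) + \<nu> B" using assms by (intro charge_Un) auto
  moreover have "(A - B) \<union> B = A" using assms by auto
  ultimately show ?thesis by simp
qed

lemma charge_abs_less:
  "abs_cont_charge M \<nu> \<Longrightarrow> 0 < e \<Longrightarrow> \<exists>d>0. \<forall>E\<in>sets M. measure M E < d \<longrightarrow> \<bar>\<nu> E\<bar> < e"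
  unfolding abs_cont_charge_def by blast

lemma charge_UN_lessThan:
  fixes n :: nat
  assumes "abs_cont_charge M \<nu>" "\<And>j. j < n \<Longrightarrow> X j \<in> sets M"
    "\<And>j j'. j < n \<Longrightarrow> j' < n \<Longrightarrow> j \<noteq> j' \<Longrightarrow> X j \<inter> X j' = {}"
  shows "\<nu> (\<Union>j<n. X j) = (\<Sum>j<n. \<nu> (X j))"
  using assms(2,3)
proof (induction n)
  case 0
  then show ?case using charge_empty[OF assms(1)] by simp
next
  case (Suc n)
  have "X j \<inter> X n = {}" if "j < n" for j
    using Suc.prems(2)[of j n] that by simp
  then have "(\<Union>j<n. X j) \<inter> X n = {}" by blast
  then have "\<nu> ((\<Union>j<n. X j) \<union> X n) = \<nu> (\<Union>j<n. X j) + \<nu> (X n)"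
    using Suc.prems(1) by (intro charge_Un[OF assms(1)]) auto
  moreover have "(\<Union>j<Suc n. X j) = (\<Union>j<n. X j) \<union> X n" by (auto simp: lessThan_Suc)
  ultimately show ?case using Suc by simp
qed

lemma (in finite_measure) abs_cont_charge_measure: "abs_cont_charge M (measure M)"
  unfolding abs_cont_charge_def
  by (auto simp: finite_measure_Union intro!: exI[where P = "\<lambda>d. d > 0 \<and> _ d"])

lemma (in finite_measure) charge_tendsto_incseq:
  assumes \<nu>: "abs_cont_charge M \<nu>" and E: "\<And>k. E k \<in> sets M" "incseq E"
  shows "(\<lambda>k. \<nu> (E k)) \<longlonglongrightarrow> \<nu> (\<Union>k. E k)"
proof (rule tendstoI)
  fix e :: real assume "0 < e"
  then obtain d where d: "0 < d" "\<forall>X\<in>sets M. measure M X < d \<longrightarrow> \<bar>\<nu> X\<bar> < e"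
    using charge_abs_less[OF \<nu>] by blast
  have "(\<lambda>k. measure M (E k)) \<longlonglongrightarrow> measure M (\<Union>k. E k)"
    using E by (intro finite_Lim_measure_incseq) auto
  then have "(\<lambda>k. measure M (\<Union>k. E k) - measure M (E k)) \<longlonglongrightarrow>
      measure M (\<Union>k. E k) - measure M (\<Union>k. E k)"
    by (intro tendsto_diff tendsto_const)
  then have "\<forall>\<^sub>F k in sequentially. measure M (\<Union>k. E k) - measure M (E k) < d"
    using d(1) by (intro order_tendstoD(2)) auto
  then show "\<forall>\<^sub>F k in sequentially. dist (\<nu> (E k)) (\<nu> (\<Union>k. E k)) < e"
  proof (rule eventually_mono)
    fix k assume "measure M (\<Union>k. E k) - measure M (E k) < d"
    moreover have "E k \<subseteq> (\<Union>k. E k)" "(\<Union>k. E k) \<in> sets M" using E by auto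
    ultimately have "\<bar>\<nu> ((\<Union>k. E k) - E k)\<bar> < e"
      using d(2) E(1)[of k] by (simp add: finite_measure_Diff)
    then show "dist (\<nu> (E k)) (\<nu> (\<Union>k. E k)) < e"
      using charge_Diff[OF \<nu> \<open>(\<Union>k. E k) \<in> sets M\<close> E(1) \<open>E k \<subseteq> _\<close>]
      by (simp add: dist_real_def abs_minus_commute)
  qed
qed

lemma (in prob_space) charge_continuous_on_chain:
  assumes \<nu>: "abs_cont_charge M \<nu>" and C: "\<And>s. C s \<in> events" "\<And>s r. s \<le> r \<Longrightarrow> C s \<subseteq> C r"
    and C_prob: "\<And>s. 0 \<le> s \<Longrightarrow> s \<le> 1 \<Longrightarrow> prob (C s) = s * prob X"
  shows "continuous_on {0..1} (\<lambda>s. \<nu> (C s))"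
  unfolding continuous_on_iff
proof (intro ballI allI impI)
  fix x e :: real assume x: "x \<in> {0..1}" and "0 < e"
  then obtain d where d: "0 < d" "\<forall>E\<in>events. prob E < d \<longrightarrow> \<bar>\<nu> E\<bar> < e"
    using charge_abs_less[OF \<nu>] by blast
  have close: "\<bar>\<nu> (C b) - \<nu> (C a)\<bar> < e"
    if ab: "a \<in> {0..1}" "b \<in> {0..1}" "a \<le> b" "b - a < d" for a b
  proof -
    have "prob (C b - C a) = (b - a) * prob X"
      using ab C by (simp add: finite_measure_Diff C_prob algebra_simps)
    also have "\<dots> \<le> b - a" using ab by (intro mult_left_le) auto
    finally have "\<bar>\<nu> (C b - C a)\<bar> < e" using d ab C(1) by auto
    then show ?thesis using charge_Diff[OF \<nu> C(1) C(1) C(2)[OF ab(3)]] by simp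
  qed
  show "\<exists>d>0. \<forall>x'\<in>{0..1}. dist x' x < d \<longrightarrow> dist (\<nu> (C x')) (\<nu> (C x)) < e"
  proof (intro exI[of _ d] conjI ballI impI d(1))
    fix x' assume x': "x' \<in> {0..1}" "dist x' x < d"
    show "dist (\<nu> (C x')) (\<nu> (C x)) < e"
    proof (cases "x \<le> x'")
      case True
      then show ?thesis using close[OF x x'(1) True] x'(2) by (simp add: dist_real_def)
    next
      case False
      then show ?thesis
        using close[OF x'(1) x] x'(2) by (simp add: dist_real_def abs_minus_commute)
    qed
  qed
qed

section \<open>Sierpinski's theorem\<close>

lemma (in prob_space) nonatomic_subset_le_pow:
  assumes na: "nonatomic M" and A: "A \<in> events" "0 < prob A"
  shows "\<exists>B\<in>events. B \<subseteq> A \<and> 0 < prob B \<and> prob B \<le> prob A / 2 ^ k"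
proof (induction k)
  case 0
  show ?case using A by auto
next
  case (Suc k)
  then obtain B where B: "B \<in> events" "B \<subseteq> A" "0 < prob B" "prob B \<le> prob A / 2 ^ k"
    by blast
  obtain E where E: "E \<in> events" "E \<subseteq> B" "prob E < prob B" "0 < prob E"
    using na B unfolding nonatomic_def by blast
  have diff: "prob (B - E) = prob B - prob E"
    using E B by (simp add: finite_measure_Diff)
  have "\<exists>B'\<in>{E, B - E}. 0 < prob B' \<and> 2 * prob B' \<le> prob B"
  proof (cases "2 * prob E \<le> prob B")
    case True
    then show ?thesis using E(4) by blast
  next
    case False
    then show ?thesis using diff E(3) by auto
  qed
  then obtain B' where "B' \<in> {E, B - E}" "0 < prob B'" "2 * prob B' \<le> prob B"
    by blast
  have "prob B' * 2 ^ Suc k = (2 * prob B') * 2 ^ k" by simp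
  also have "\<dots> \<le> prob B * 2 ^ k"
    using \<open>2 * prob B' \<le> prob B\<close> by (intro mult_right_mono) auto
  also have "\<dots> \<le> prob A" using B(4) by (simp add: divide_simps)
  finally have "prob B' \<le> prob A / 2 ^ Suc k"
    by (simp add: divide_simps)
  moreover have "B' \<in> events" "B' \<subseteq> A" using \<open>B' \<in> {E, B - E}\<close> E B by auto
  ultimately show ?case using \<open>0 < prob B'\<close> by blast
qed

lemma (in prob_space) nonatomic_subset_less:
  assumes na: "nonatomic M" and A: "A \<in> events" "0 < prob A" and "0 < \<eta>"
  shows "\<exists>B\<in>events. B \<subseteq> A \<and> 0 < prob B \<and> prob B < \<eta>"
proof -
  obtain k :: nat where "prob A / \<eta> < 2 ^ k" using real_arch_pow[of 2 "prob A / \<eta>"] by auto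
  then have "prob A / 2 ^ k < \<eta>" using \<open>0 < \<eta>\<close> by (simp add: divide_simps mult.commute)
  moreover obtain B where "B \<in> events" "B \<subseteq> A" "0 < prob B" "prob B \<le> prob A / 2 ^ k"
    using nonatomic_subset_le_pow[OF na A, of k] by blast
  ultimately show ?thesis by (intro bexI[of _ B]) auto
qed

lemma (in prob_space) greedy_subset:
  assumes B: "B \<in> events" "prob B \<le> x"
  shows "\<exists>C\<in>events. C \<subseteq> A - B \<and> prob B + prob C \<le> x \<and>
    (\<forall>C'\<in>events. C' \<subseteq> A - B \<longrightarrow> prob B + prob C' \<le> x \<longrightarrow> prob C' \<le> 2 * prob C)"
proof -
  define S where "S = {prob C | C. C \<in> events \<and> C \<subseteq> A - B \<and> prob B + prob C \<le> x}"
  have "0 \<in> S"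
    unfolding S_def using B by (auto intro!: exI[of _ "{}"])
  have "bdd_above S"
    unfolding S_def by (intro bdd_aboveI[of _ 1]) auto
  have S_upper: "prob C' \<le> Sup S"
    if "C' \<in> events" "C' \<subseteq> A - B" "prob B + prob C' \<le> x" for C'
  proof (rule cSup_upper[OF _ \<open>bdd_above S\<close>])
    show "prob C' \<in> S" unfolding S_def using that by blast
  qed
  show ?thesis
  proof (cases "Sup S \<le> 0")
    case True
    then show ?thesis using B S_upper by (intro bexI[of _ "{}"]) force+
  next
    case False
    then have "Sup S / 2 < Sup S" by simp
    then obtain y where "y \<in> S" "Sup S / 2 < y"
      using less_cSup_iff[OF _ \<open>bdd_above S\<close>] \<open>0 \<in> S\<close> by blast
    then obtain C where "C \<in> events" "C \<subseteq> A - B" "prob B + prob C \<le> x" "Sup S / 2 < prob C"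
      unfolding S_def by blast
    then show ?thesis using S_upper by (intro bexI[of _ C]) force+
  qed
qed

lemma (in prob_space) greedy_chain:
  assumes "0 \<le> x"
  shows "\<exists>Bs. incseq Bs \<and> (\<forall>k. Bs k \<in> events \<and> Bs k \<subseteq> A \<and> prob (Bs k) \<le> x) \<and>
    (\<lambda>k. prob (Bs (Suc k)) - prob (Bs k)) \<longlonglongrightarrow> 0 \<and>
    (\<forall>k. \<forall>C\<in>events. C \<subseteq> A - Bs k \<longrightarrow> prob (Bs k) + prob C \<le> x \<longrightarrow>
      prob C \<le> 2 * (prob (Bs (Suc k)) - prob (Bs k)))"
proof -
  define ch where "ch B = (SOME C. C \<in> events \<and> C \<subseteq> A - B \<and> prob B + prob C \<le> x \<and>
      (\<forall>C'\<in>events. C' \<subseteq> A - B \<longrightarrow> prob B + prob C' \<le> x \<longrightarrow> prob C' \<le> 2 * prob C))" for B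
  have ch: "ch B \<in> events \<and> ch B \<subseteq> A - B \<and> prob B + prob (ch B) \<le> x \<and>
      (\<forall>C'\<in>events. C' \<subseteq> A - B \<longrightarrow> prob B + prob C' \<le> x \<longrightarrow> prob C' \<le> 2 * prob (ch B))"
    if "B \<in> events" "prob B \<le> x" for B
    unfolding ch_def
    by (rule someI_ex) (use greedy_subset[OF that, of A] in \<open>simp only: Bex_def\<close>)
  define Bs where "Bs = rec_nat {} (\<lambda>_ B. B \<union> ch B)"
  have Bs_Suc: "Bs (Suc k) = Bs k \<union> ch (Bs k)" for k by (simp add: Bs_def)
  have Bs: "Bs k \<in> events \<and> Bs k \<subseteq> A \<and> prob (Bs k) \<le> x" for k
  proof (induction k)
    case 0
    then show ?case using \<open>0 \<le> x\<close> by (simp add: Bs_def)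
  next
    case (Suc k)
    have c: "ch (Bs k) \<in> events" "ch (Bs k) \<subseteq> A - Bs k" "prob (Bs k) + prob (ch (Bs k)) \<le> x"
      using ch[of "Bs k"] Suc by auto
    have "prob (Bs k \<union> ch (Bs k)) = prob (Bs k) + prob (ch (Bs k))"
      using c Suc by (intro finite_measure_Union) auto
    then show ?case using c Suc by (auto simp: Bs_Suc)
  qed
  have increment: "prob (Bs (Suc k)) - prob (Bs k) = prob (ch (Bs k))" for k
  proof -
    have "ch (Bs k) \<in> events" "ch (Bs k) \<subseteq> A - Bs k"
      using ch[of "Bs k"] Bs[of k] by auto
    then show ?thesis unfolding Bs_Suc using Bs[of k] by (subst finite_measure_Union) auto
  qed
  have "incseq Bs" by (rule incseq_SucI) (simp add: Bs_Suc)
  then have "(\<lambda>k. prob (Bs k)) \<longlonglongrightarrow> prob (\<Union>k. Bs k)"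
    using Bs by (intro finite_Lim_measure_incseq) auto
  then have "(\<lambda>k. prob (Bs (Suc k)) - prob (Bs k)) \<longlonglongrightarrow> prob (\<Union>k. Bs k) - prob (\<Union>k. Bs k)"
    by (intro tendsto_diff LIMSEQ_Suc)
  then have "(\<lambda>k. prob (Bs (Suc k)) - prob (Bs k)) \<longlonglongrightarrow> 0" by simp
  moreover have "\<forall>k. \<forall>C\<in>events. C \<subseteq> A - Bs k \<longrightarrow> prob (Bs k) + prob C \<le> x \<longrightarrow>
      prob C \<le> 2 * (prob (Bs (Suc k)) - prob (Bs k))"
    unfolding increment using ch Bs by blast
  ultimately show ?thesis using \<open>incseq Bs\<close> Bs by blast
qed

text \<open>A greedy chain increases to a set B with prob B \<le> x; as the greedy increments tend to 0,
  no set of positive measure fits into the gap A - B below x, so by nonatomicity there is no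
  gap.\<close>
lemma (in prob_space) nonatomic_subset_prob_eq:
  assumes na: "nonatomic M" and A: "A \<in> events" and x: "0 \<le> x" "x \<le> prob A"
  shows "\<exists>B\<in>events. B \<subseteq> A \<and> prob B = x"
proof -
  obtain Bs where inc: "incseq Bs" and Bs: "\<forall>k. Bs k \<in> events \<and> Bs k \<subseteq> A \<and> prob (Bs k) \<le> x"
    and increment: "(\<lambda>k. prob (Bs (Suc k)) - prob (Bs k)) \<longlonglongrightarrow> 0"
    and greedy: "\<forall>k. \<forall>C\<in>events. C \<subseteq> A - Bs k \<longrightarrow> prob (Bs k) + prob C \<le> x \<longrightarrow>
      prob C \<le> 2 * (prob (Bs (Suc k)) - prob (Bs k))"
    using greedy_chain[OF x(1), of A] by blast
  define B where "B = (\<Union>k. Bs k)"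
  have B: "B \<in> events" "B \<subseteq> A" and Bs_B: "\<And>k. Bs k \<subseteq> B"
    unfolding B_def using Bs by auto
  have "(\<lambda>k. prob (Bs k)) \<longlonglongrightarrow> prob B"
    unfolding B_def using Bs inc by (intro finite_Lim_measure_incseq) auto
  then have "prob B \<le> x" using Bs by (intro LIMSEQ_le_const2) auto
  moreover have "\<not> prob B < x"
  proof
    assume lt: "prob B < x"
    have "prob (A - B) = prob A - prob B" using A B by (simp add: finite_measure_Diff)
    then have "0 < prob (A - B)" using lt x by simp
    then obtain E where E: "E \<in> events" "E \<subseteq> A - B" "0 < prob E" "prob E < x - prob B"
      using nonatomic_subset_less[OF na, of "A - B" "x - prob B"] A B lt by auto
    have le_increment: "prob E \<le> 2 * (prob (Bs (Suc k)) - prob (Bs k))" for k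
    proof -
      have "prob (Bs k) \<le> prob B" using Bs B Bs_B by (intro finite_measure_mono) auto
      then have "prob (Bs k) + prob E \<le> x" using E(4) by simp
      moreover have "E \<subseteq> A - Bs k" using E(2) Bs_B[of k] by blast
      ultimately show ?thesis using greedy E(1) by blast
    qed
    have "\<forall>\<^sub>F k in sequentially. prob (Bs (Suc k)) - prob (Bs k) < prob E / 2"
      using increment E(3) by (intro order_tendstoD(2)) auto
    then obtain k where "prob (Bs (Suc k)) - prob (Bs k) < prob E / 2"
      by (auto simp: eventually_sequentially)
    then show False using le_increment[of k] by (simp add: field_simps)
  qed
  ultimately show ?thesis using B by (intro bexI[of _ B]) auto
qed

section \<open>Lyapunov's convexity theorem\<close>

definition dyadic_floor :: "real \<Rightarrow> nat \<Rightarrow> nat" where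
  "dyadic_floor s k = nat \<lfloor>s * 2 ^ k\<rfloor>"

lemma dyadic_floor_double: "2 * dyadic_floor s k \<le> dyadic_floor s (Suc k)"
proof -
  have "2 * \<lfloor>s * 2 ^ k\<rfloor> \<le> \<lfloor>2 * (s * 2 ^ k)\<rfloor>" by (simp add: le_floor_iff)
  then show ?thesis unfolding dyadic_floor_def by (simp add: mult.assoc mult.left_commute)
qed

lemma dyadic_floor_mono: "s \<le> r \<Longrightarrow> dyadic_floor s k \<le> dyadic_floor r k"
  unfolding dyadic_floor_def by (intro nat_mono floor_mono mult_right_mono) auto

lemma dyadic_floor_bounds:
  assumes "0 \<le> s"
  shows "real (dyadic_floor s k) \<le> s * 2 ^ k" "s * 2 ^ k - 1 < real (dyadic_floor s k)"
proof -
  have "real (dyadic_floor s k) = of_int \<lfloor>s * 2 ^ k\<rfloor>"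
    using assms unfolding dyadic_floor_def by simp
  then show "real (dyadic_floor s k) \<le> s * 2 ^ k" "s * 2 ^ k - 1 < real (dyadic_floor s k)"
    by linarith+
qed

lemma dyadic_floor_le_pow:
  assumes "0 \<le> s" "s \<le> 1"
  shows "dyadic_floor s k \<le> 2 ^ k"
proof -
  have "s * 2 ^ k \<le> 1 * 2 ^ k" using assms by (intro mult_right_mono) auto
  then have "real (dyadic_floor s k) \<le> 2 ^ k" using dyadic_floor_bounds[OF assms(1), of k] by linarith
  also have "(2 :: real) ^ k = real ((2 :: nat) ^ k)" by simp
  finally show ?thesis by (simp only: of_nat_le_iff)
qed

lemma dyadic_floor_zero [simp]: "dyadic_floor 0 k = 0"
  by (simp add: dyadic_floor_def)

lemma dyadic_floor_one [simp]: "dyadic_floor 1 k = 2 ^ k"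
  unfolding dyadic_floor_def by (metis floor_of_nat mult_1 nat_int of_nat_numeral of_nat_power)

lemma tendsto_dyadic_floor:
  assumes "0 \<le> s"
  shows "(\<lambda>k. real (dyadic_floor s k) / 2 ^ k) \<longlonglongrightarrow> s"
proof (rule tendsto_sandwich[of "\<lambda>k. s - (1 / 2) ^ k" _ _ "\<lambda>k. s"])
  show "\<forall>\<^sub>F k in sequentially. s - (1 / 2) ^ k \<le> real (dyadic_floor s k) / 2 ^ k"
    using dyadic_floor_bounds[OF assms]
    by (intro always_eventually allI) (simp add: divide_simps power_one_over less_imp_le)
  show "\<forall>\<^sub>F k in sequentially. real (dyadic_floor s k) / 2 ^ k \<le> s"
    using dyadic_floor_bounds[OF assms] by (intro always_eventually allI) (simp add: divide_simps)
  show "(\<lambda>k. s - (1 / 2 :: real) ^ k) \<longlonglongrightarrow> s"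
    using tendsto_diff[OF tendsto_const LIMSEQ_realpow_zero[of "1 / 2 :: real"]] by simp
qed simp

text \<open>Iterating H splits an event A into the 2^k cells of level k; the unions of the first
  dyadic_floor s k cells increase with k to dyadic_set A s, on which every charge in V takes
  the fraction s of its value on A.\<close>
locale halving_operator = prob_space M for M :: "'a measure" +
  fixes V :: "('a set \<Rightarrow> real) set" and H :: "'a set \<Rightarrow> 'a set"
  assumes charge: "\<nu> \<in> V \<Longrightarrow> abs_cont_charge M \<nu>"
    and H_sets: "X \<in> events \<Longrightarrow> H X \<in> events"
    and H_subset: "X \<in> events \<Longrightarrow> H X \<subseteq> X"
    and H_halves: "X \<in> events \<Longrightarrow> \<nu> \<in> V \<Longrightarrow> \<nu> (H X) = \<nu> X / 2"
begin

fun cell :: "'a set \<Rightarrow> nat \<Rightarrow> nat \<Rightarrow> 'a set" where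
  "cell A 0 j = A"
| "cell A (Suc k) j =
    (if even j then H (cell A k (j div 2)) else cell A k (j div 2) - H (cell A k (j div 2)))"

lemma cell_sets:
  assumes "A \<in> events"
  shows "cell A k j \<in> events \<and> cell A k j \<subseteq> A"
proof (induction k arbitrary: j)
  case 0
  then show ?case using assms by simp
next
  case (Suc k)
  then show ?case using H_sets[of "cell A k (j div 2)"] H_subset[of "cell A k (j div 2)"] by auto
qed

lemma cell_Suc_subset: "A \<in> events \<Longrightarrow> cell A (Suc k) j \<subseteq> cell A k (j div 2)"
  using H_subset cell_sets by auto

lemma cell_value:
  assumes A: "A \<in> events" and \<nu>: "\<nu> \<in> V"
  shows "\<nu> (cell A k j) = \<nu> A / 2 ^ k"
proof (induction k arbitrary: j)
  case 0
  then show ?case by simp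
next
  case (Suc k)
  let ?X = "cell A k (j div 2)"
  have X: "?X \<in> events" using cell_sets[OF A] by blast
  have "\<nu> (?X - H ?X) = \<nu> ?X - \<nu> (H ?X)"
    using charge_Diff[OF charge[OF \<nu>] X H_sets[OF X] H_subset[OF X]] .
  then show ?case using Suc H_halves[OF X \<nu>] by simp
qed

lemma cell_disjoint:
  assumes A: "A \<in> events"
  shows "j < 2 ^ k \<Longrightarrow> j' < 2 ^ k \<Longrightarrow> j \<noteq> j' \<Longrightarrow> cell A k j \<inter> cell A k j' = {}"
proof (induction k arbitrary: j j')
  case 0
  then show ?case by simp
next
  case (Suc k)
  show ?case
  proof (cases "j div 2 = j' div 2")
    case True
    then have "even j \<noteq> even j'" using Suc.prems(3)
      by (metis div_mult_mod_eq dvd_imp_mod_0 odd_iff_mod_2_eq_one)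
    then show ?thesis using True by auto
  next
    case False
    have "j div 2 < 2 ^ k" "j' div 2 < 2 ^ k" using Suc.prems by auto
    then have "cell A k (j div 2) \<inter> cell A k (j' div 2) = {}" using Suc.IH False by blast
    then show ?thesis using cell_Suc_subset[OF A, of k j] cell_Suc_subset[OF A, of k j'] by blast
  qed
qed

definition cells_below :: "'a set \<Rightarrow> nat \<Rightarrow> nat \<Rightarrow> 'a set" where
  "cells_below A k a = (\<Union>j<a. cell A k j)"

lemma cells_below_sets: "A \<in> events \<Longrightarrow> cells_below A k a \<in> events \<and> cells_below A k a \<subseteq> A"
  unfolding cells_below_def using cell_sets by blast

lemma cells_below_mono: "a \<le> b \<Longrightarrow> cells_below A k a \<subseteq> cells_below A k b"
  unfolding cells_below_def by (auto intro: order_less_le_trans)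

lemma cells_below_double:
  assumes A: "A \<in> events"
  shows "cells_below A (Suc k) (2 * a) = cells_below A k a"
proof
  show "cells_below A (Suc k) (2 * a) \<subseteq> cells_below A k a"
    unfolding cells_below_def using cell_Suc_subset[OF A, of k] by fastforce
next
  show "cells_below A k a \<subseteq> cells_below A (Suc k) (2 * a)"
  proof
    fix x assume "x \<in> cells_below A k a"
    then obtain j where j: "j < a" "x \<in> cell A k j" unfolding cells_below_def by blast
    then have "x \<in> cell A (Suc k) (2 * j) \<or> x \<in> cell A (Suc k) (2 * j + 1)" by simp
    moreover have "2 * j < 2 * a" "2 * j + 1 < 2 * a" using j(1) by auto
    ultimately show "x \<in> cells_below A (Suc k) (2 * a)" unfolding cells_below_def by blast
  qed
qed

lemma cells_below_all: "A \<in> events \<Longrightarrow> cells_below A k (2 ^ k) = A"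
proof (induction k)
  case 0
  then show ?case by (simp add: cells_below_def lessThan_Suc)
next
  case (Suc k)
  then show ?case using cells_below_double[of A k "2 ^ k"] by simp
qed

lemma cells_below_value:
  assumes A: "A \<in> events" and \<nu>: "\<nu> \<in> V" and "a \<le> 2 ^ k"
  shows "\<nu> (cells_below A k a) = real a * (\<nu> A / 2 ^ k)"
proof -
  have "\<nu> (cells_below A k a) = (\<Sum>j<a. \<nu> (cell A k j))"
    unfolding cells_below_def
  proof (rule charge_UN_lessThan[OF charge[OF \<nu>]])
    show "cell A k j \<in> events" for j using cell_sets[OF A] by blast
    show "cell A k j \<inter> cell A k j' = {}" if "j < a" "j' < a" "j \<noteq> j'" for j j'
    proof -
      have "j < 2 ^ k" "j' < 2 ^ k" using that \<open>a \<le> 2 ^ k\<close> by linarith+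
      then show ?thesis using cell_disjoint[OF A] \<open>j \<noteq> j'\<close> by blast
    qed
  qed
  then show ?thesis using cell_value[OF A \<nu>] by simp
qed

definition dyadic_set :: "'a set \<Rightarrow> real \<Rightarrow> 'a set" where
  "dyadic_set A s = (\<Union>k. cells_below A k (dyadic_floor s k))"

lemma dyadic_set_sets: "A \<in> events \<Longrightarrow> dyadic_set A s \<in> events \<and> dyadic_set A s \<subseteq> A"
  unfolding dyadic_set_def using cells_below_sets by blast

lemma dyadic_set_mono:
  assumes "s \<le> r"
  shows "dyadic_set A s \<subseteq> dyadic_set A r"
proof -
  have "cells_below A k (dyadic_floor s k) \<subseteq> cells_below A k (dyadic_floor r k)" for k
    by (rule cells_below_mono[OF dyadic_floor_mono[OF assms]])
  then show ?thesis unfolding dyadic_set_def by blast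
qed

lemma dyadic_set_zero [simp]: "dyadic_set A 0 = {}"
  by (simp add: dyadic_set_def cells_below_def)

lemma dyadic_set_one [simp]: "A \<in> events \<Longrightarrow> dyadic_set A 1 = A"
  by (simp add: dyadic_set_def cells_below_all)

lemma dyadic_set_value:
  assumes A: "A \<in> events" and \<nu>: "\<nu> \<in> V" and s: "0 \<le> s" "s \<le> 1"
  shows "\<nu> (dyadic_set A s) = s * \<nu> A"
proof -
  have "incseq (\<lambda>k. cells_below A k (dyadic_floor s k))"
  proof (rule incseq_SucI)
    fix k
    show "cells_below A k (dyadic_floor s k) \<subseteq> cells_below A (Suc k) (dyadic_floor s (Suc k))"
      using cells_below_double[OF A, of k] cells_below_mono[OF dyadic_floor_double] by metis
  qed
  then have "(\<lambda>k. \<nu> (cells_below A k (dyadic_floor s k))) \<longlonglongrightarrow> \<nu> (dyadic_set A s)"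
    unfolding dyadic_set_def using cells_below_sets[OF A]
    by (intro charge_tendsto_incseq[OF charge[OF \<nu>]]) auto
  moreover have "(\<lambda>k. \<nu> (cells_below A k (dyadic_floor s k))) \<longlonglongrightarrow> s * \<nu> A"
  proof -
    have "(\<lambda>k. real (dyadic_floor s k) / 2 ^ k * \<nu> A) \<longlonglongrightarrow> s * \<nu> A"
      by (intro tendsto_mult tendsto_dyadic_floor s tendsto_const)
    then show ?thesis
      using cells_below_value[OF A \<nu> dyadic_floor_le_pow[OF s]] by simp
  qed
  ultimately show ?thesis using LIMSEQ_unique by blast
qed

lemma continuous_on_dyadic_set:
  assumes "prob \<in> V" and "abs_cont_charge M \<nu>" and X: "X \<in> events"
  shows "continuous_on {0..1} (\<lambda>s. \<nu> (dyadic_set X s))"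
  using dyadic_set_sets[OF X] dyadic_set_mono dyadic_set_value[OF X \<open>prob \<in> V\<close>]
  by (intro charge_continuous_on_chain[OF \<open>abs_cont_charge M \<nu>\<close>]) auto

lemma charge_sweep:
  assumes \<mu>: "abs_cont_charge M \<mu>" and X: "X \<in> events" "Y \<in> events" "X \<inter> Y = {}"
  shows "\<mu> (dyadic_set X s \<union> (Y - dyadic_set Y s)) =
    \<mu> (dyadic_set X s) + \<mu> Y - \<mu> (dyadic_set Y s)"
proof -
  have "dyadic_set X s \<inter> (Y - dyadic_set Y s) = {}"
    using dyadic_set_sets[OF X(1)] X(3) by blast
  then have "\<mu> (dyadic_set X s \<union> (Y - dyadic_set Y s)) =
      \<mu> (dyadic_set X s) + \<mu> (Y - dyadic_set Y s)"
    using dyadic_set_sets[OF X(1)] dyadic_set_sets[OF X(2)] X(2) by (intro charge_Un[OF \<mu>]) auto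
  then show ?thesis using charge_Diff[OF \<mu> X(2)] dyadic_set_sets[OF X(2)] by simp
qed

text \<open>Halving one more charge: the event B s sweeps from A - H A (at s = 0) to H A (at s = 1)
  while every charge in V stays at half its value on A, so the intermediate value theorem
  finds an s at which the new charge is halved as well.\<close>
lemma halving_step:
  assumes prob_V: "prob \<in> V" and \<nu>: "abs_cont_charge M \<nu>" and A: "A \<in> events"
  shows "\<exists>B\<in>events. B \<subseteq> A \<and> \<nu> B = \<nu> A / 2 \<and> (\<forall>\<mu>\<in>V. \<mu> B = \<mu> A / 2)"
proof -
  define A1 where "A1 = H A"
  define A2 where "A2 = A - A1"
  have A1: "A1 \<in> events" "A1 \<subseteq> A" and A2: "A2 \<in> events" "A2 \<subseteq> A" and "A1 \<inter> A2 = {}"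
    unfolding A1_def A2_def using H_sets H_subset A by auto
  have A2_value: "\<mu> A2 = \<mu> A - \<mu> A1" if "abs_cont_charge M \<mu>" for \<mu>
    unfolding A2_def using charge_Diff[OF that A A1(1) A1(2)] .
  define B where "B s = dyadic_set A1 s \<union> (A2 - dyadic_set A2 s)" for s
  have B: "B s \<in> events" "B s \<subseteq> A" for s
    unfolding B_def using dyadic_set_sets[OF A1(1), of s] dyadic_set_sets[OF A2(1), of s] A1 A2
    by auto
  note B_value = charge_sweep[OF _ A1(1) A2(1) \<open>A1 \<inter> A2 = {}\<close>, folded B_def]
  have "continuous_on {0..1} (\<lambda>s. \<nu> (B s))"
    unfolding B_value[OF \<nu>] using continuous_on_dyadic_set[OF prob_V \<nu>] A1(1) A2(1)
    by (intro continuous_on_diff continuous_on_add continuous_on_const) auto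
  moreover have "\<nu> (B 0) = \<nu> A - \<nu> A1" "\<nu> (B 1) = \<nu> A1"
    using B_value[OF \<nu>] A2_value[OF \<nu>] charge_empty[OF \<nu>] A1(1) A2(1) by simp_all
  ultimately obtain s where s: "0 \<le> s" "s \<le> 1" "\<nu> (B s) = \<nu> A / 2"
    using IVT'[of "\<lambda>s. \<nu> (B s)" 0 "\<nu> A / 2" 1] IVT2'[of "\<lambda>s. \<nu> (B s)" 1 "\<nu> A / 2" 0]
    by (cases "\<nu> A1 \<le> \<nu> A / 2") force+
  have "\<mu> (B s) = \<mu> A / 2" if "\<mu> \<in> V" for \<mu>
    using B_value[OF charge[OF that], of s] dyadic_set_value[OF A1(1) that s(1,2)]
      dyadic_set_value[OF A2(1) that s(1,2)] H_halves[OF A that] A2_value[OF charge[OF that]]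
    unfolding A1_def by simp
  then show ?thesis using B s(3) by blast
qed

end

lemma (in prob_space) exists_halving_set:
  assumes na: "nonatomic M" and "finite V" and "\<forall>\<nu>\<in>V. abs_cont_charge M \<nu>"
  shows "\<forall>A\<in>events. \<exists>B\<in>events. B \<subseteq> A \<and> prob B = prob A / 2 \<and> (\<forall>\<nu>\<in>V. \<nu> B = \<nu> A / 2)"
  using assms(2,3)
proof (induction V rule: finite_induct)
  case empty
  show ?case
  proof
    fix A assume "A \<in> events"
    then show "\<exists>B\<in>events. B \<subseteq> A \<and> prob B = prob A / 2 \<and> (\<forall>\<nu>\<in>{}. \<nu> B = \<nu> A / 2)"
      using nonatomic_subset_prob_eq[OF na, of A "prob A / 2"] by auto
  qed
next
  case (insert \<nu> V)
  then obtain H where H: "\<forall>X\<in>events. H X \<in> events \<and> H X \<subseteq> X \<and>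
      prob (H X) = prob X / 2 \<and> (\<forall>\<mu>\<in>V. \<mu> (H X) = \<mu> X / 2)"
    using bchoice[of events] by (metis insert_iff)
  interpret halving_operator M "insert prob V" H
    using H insert.prems abs_cont_charge_measure by unfold_locales auto
  show ?case
  proof
    fix A assume "A \<in> events"
    then obtain B where "B \<in> events" "B \<subseteq> A" "\<nu> B = \<nu> A / 2" "\<forall>\<mu>\<in>insert prob V. \<mu> B = \<mu> A / 2"
      using halving_step[of \<nu> A] insert.prems by blast
    then show "\<exists>B\<in>events. B \<subseteq> A \<and> prob B = prob A / 2 \<and> (\<forall>\<mu>\<in>insert \<nu> V. \<mu> B = \<mu> A / 2)"
      by auto
  qed
qed

theorem (in prob_space) lyapunov_convexity:
  assumes "nonatomic M" "finite V" "\<forall>\<nu>\<in>V. abs_cont_charge M \<nu>" and t: "0 \<le> t" "t \<le> 1"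
  shows "\<exists>E\<in>events. \<forall>\<nu>\<in>V. \<nu> E = t * \<nu> (space M)"
proof -
  obtain H where H: "\<forall>X\<in>events. H X \<in> events \<and> H X \<subseteq> X \<and>
      prob (H X) = prob X / 2 \<and> (\<forall>\<nu>\<in>V. \<nu> (H X) = \<nu> X / 2)"
    using exists_halving_set[OF assms(1-3)] bchoice[of events] by metis
  interpret halving_operator M V H
    using H assms(3) by unfold_locales auto
  show ?thesis
    using dyadic_set_sets[OF sets.top] dyadic_set_value[OF sets.top _ t] by blast
qed

section \<open>Absolute continuity of integrals\<close>

text \<open>Otherwise the sets E j with P (E j) < (1/2)^j and R (E j) \<ge> e would have a limsup that is
  P-null by Borel--Cantelli but has R-measure at least e.\<close>
lemma absolutely_continuous_measure_less:
  assumes "finite_measure P" "finite_measure R" and sets_R: "sets R = sets P"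
    and ac: "absolutely_continuous P R" and "0 < e"
  shows "\<exists>d>0. \<forall>E\<in>sets P. measure P E < d \<longrightarrow> measure R E < e"
proof (rule ccontr)
  interpret P: finite_measure P by fact
  interpret R: finite_measure R by fact
  assume contra: "\<not> ?thesis"
  have "\<exists>E. E \<in> sets P \<and> measure P E < (1 / 2) ^ j \<and> e \<le> measure R E" for j :: nat
  proof -
    have "(0 :: real) < (1 / 2) ^ j" by simp
    then show ?thesis using contra by (meson not_le)
  qed
  then obtain E where E: "\<And>j. E j \<in> sets P" "\<And>j. measure P (E j) < (1 / 2) ^ j"
      "\<And>j. e \<le> measure R (E j)"
    by metis
  have "limsup E \<in> null_sets P"
  proof (rule borel_cantelli_limsup1)
    show "summable (\<lambda>j. measure P (E j))"
      using E(2) by (intro summable_comparison_test'[OF summable_geometric[of "1 / 2"]])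
        (auto intro: less_imp_le)
  qed (use E(1) in \<open>auto simp: less_top[symmetric]\<close>)
  then have "limsup E \<in> null_sets R"
    using ac unfolding absolutely_continuous_def by blast
  then have null: "measure R (limsup E) = 0"
    by (simp add: null_sets_def measure_def)
  define T where "T n = (\<Union>k\<in>{n..}. E k)" for n
  have T: "T n \<in> sets R" "E n \<subseteq> T n" for n
    unfolding T_def using E(1) sets_R by auto
  have "decseq T" unfolding T_def by (intro decseq_SucI UN_mono) auto
  then have "(\<lambda>n. measure R (T n)) \<longlonglongrightarrow> measure R (\<Inter>n. T n)"
    using T(1) by (intro R.finite_Lim_measure_decseq) auto
  moreover have "(\<Inter>n. T n) = limsup E" unfolding T_def by (simp add: limsup_INF_SUP)
  moreover have "e \<le> measure R (T n)" for n
    using E(3)[of n] R.finite_measure_mono[OF T(2)[of n] T(1)[of n]] by linarith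
  ultimately have "e \<le> 0" using null by (metis LIMSEQ_le_const)
  with \<open>0 < e\<close> show False by simp
qed

lemma emeasure_distr_density_abs:
  fixes k :: "'b \<Rightarrow> real"
  assumes \<pi>: "\<pi> \<in> measurable Q N" and k: "integrable Q k" and E: "E \<in> sets N"
  shows "emeasure (distr (density Q (\<lambda>x. ennreal \<bar>k x\<bar>)) N \<pi>) E =
    ennreal (LINT x:\<pi> -` E \<inter> space Q|Q. \<bar>k x\<bar>)"
proof -
  have [measurable]: "k \<in> borel_measurable Q" using k by (rule borel_measurable_integrable)
  have pre: "\<pi> -` E \<inter> space Q \<in> sets Q" using \<pi> E by (rule measurable_sets)
  have \<pi>_density: "\<pi> \<in> measurable (density Q (\<lambda>x. ennreal \<bar>k x\<bar>)) N"
    using \<pi> measurable_cong_sets[OF sets_density refl] by blast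
  have "emeasure (distr (density Q (\<lambda>x. ennreal \<bar>k x\<bar>)) N \<pi>) E =
      (\<integral>\<^sup>+ x. ennreal \<bar>k x\<bar> * indicator (\<pi> -` E \<inter> space Q) x \<partial>Q)"
    using E pre by (simp add: emeasure_distr[OF \<pi>_density] emeasure_density)
  also have "\<dots> = (\<integral>\<^sup>+ x. ennreal (indicator (\<pi> -` E \<inter> space Q) x *\<^sub>R \<bar>k x\<bar>) \<partial>Q)"
    by (intro nn_integral_cong) (auto simp: indicator_def)
  also have "\<dots> = ennreal (LINT x:\<pi> -` E \<inter> space Q|Q. \<bar>k x\<bar>)"
    using integrable_mult_indicator[OF pre integrable_abs[OF k]]
    unfolding set_lebesgue_integral_def by (intro nn_integral_eq_integral) auto
  finally show ?thesis .
qed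

lemma absolutely_continuous_distr_density:
  assumes \<pi>: "\<pi> \<in> measurable Q N" and f: "f \<in> borel_measurable Q"
    and ac: "absolutely_continuous P (distr Q N \<pi>)"
  shows "absolutely_continuous P (distr (density Q f) N \<pi>)"
proof -
  have \<pi>_density: "\<pi> \<in> measurable (density Q f) N"
    using \<pi> measurable_cong_sets[OF sets_density refl] by blast
  have "X \<in> null_sets (distr (density Q f) N \<pi>)" if "X \<in> null_sets (distr Q N \<pi>)" for X
  proof -
    have X: "\<pi> -` X \<inter> space Q \<in> null_sets Q" "X \<in> sets N"
      using that null_sets_distr_iff[OF \<pi>] by auto
    have "\<pi> -` X \<inter> space Q \<in> null_sets (density Q f)"
      using X(1) AE_not_in[OF X(1)] f by (auto simp: null_sets_density_iff)
    then show ?thesis using X(2) null_sets_distr_iff[OF \<pi>_density] by simp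
  qed
  then show ?thesis using ac unfolding absolutely_continuous_def by blast
qed

text \<open>The integral of |k| over preimages under \<pi> is the image under \<pi> of the measure with
  density |k|, a finite measure absolutely continuous with respect to P.\<close>
lemma set_integral_preimage_abs_less:
  fixes k :: "'b \<Rightarrow> real"
  assumes "finite_measure P" and sets_P: "sets P = sets N" and \<pi>: "\<pi> \<in> measurable Q N"
    and ac: "absolutely_continuous P (distr Q N \<pi>)" and k: "integrable Q k" and "0 < e"
  shows "\<exists>d>0. \<forall>E\<in>sets P. measure P E < d \<longrightarrow> (LINT x:\<pi> -` E \<inter> space Q|Q. \<bar>k x\<bar>) < e"
proof -
  have [measurable]: "k \<in> borel_measurable Q" using k by (rule borel_measurable_integrable)
  define R where "R = distr (density Q (\<lambda>x. ennreal \<bar>k x\<bar>)) N \<pi>"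
  have sets_R: "sets R = sets P" unfolding R_def using sets_P by simp
  have emeasure_R: "emeasure R E = ennreal (LINT x:\<pi> -` E \<inter> space Q|Q. \<bar>k x\<bar>)"
    if "E \<in> sets P" for E
    unfolding R_def using emeasure_distr_density_abs[OF \<pi> k] that sets_P by blast
  have "finite_measure R"
  proof
    have "space R \<in> sets P" using sets_R by (metis sets.top)
    then show "emeasure R (space R) \<noteq> \<infinity>" using emeasure_R by simp
  qed
  moreover have "absolutely_continuous P R"
    unfolding R_def by (rule absolutely_continuous_distr_density[OF \<pi> _ ac]) measurable
  ultimately obtain d where d: "0 < d" "\<forall>E\<in>sets P. measure P E < d \<longrightarrow> measure R E < e"
    using absolutely_continuous_measure_less[OF \<open>finite_measure P\<close> _ sets_R _ \<open>0 < e\<close>] by blast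
  have "measure R E = (LINT x:\<pi> -` E \<inter> space Q|Q. \<bar>k x\<bar>)" if "E \<in> sets P" for E
    using emeasure_R[OF that] unfolding measure_def
    by (simp add: set_lebesgue_integral_def integral_nonneg)
  then show ?thesis using d by (intro exI[of _ d]) auto
qed

lemma abs_cont_charge_set_integral_preimage:
  fixes k :: "'b \<Rightarrow> real"
  assumes "finite_measure P" and sets_P: "sets P = sets N" and \<pi>: "\<pi> \<in> measurable Q N"
    and ac: "absolutely_continuous P (distr Q N \<pi>)" and k: "integrable Q k"
  shows "abs_cont_charge P (\<lambda>E. LINT x:\<pi> -` E \<inter> space Q|Q. k x)"
  unfolding abs_cont_charge_def
proof (intro conjI ballI allI impI)
  have pre: "\<pi> -` E \<inter> space Q \<in> sets Q" if "E \<in> sets P" for E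
    using that sets_P \<pi> by (auto intro: measurable_sets)
  have int: "set_integrable Q S k" if "S \<in> sets Q" for S
    unfolding set_integrable_def using that k by (rule integrable_mult_indicator)
  {
    fix A B assume AB: "A \<in> sets P" "B \<in> sets P" "A \<inter> B = {}"
    have "\<pi> -` (A \<union> B) \<inter> space Q = (\<pi> -` A \<inter> space Q) \<union> (\<pi> -` B \<inter> space Q)" by blast
    then show "(LINT x:\<pi> -` (A \<union> B) \<inter> space Q|Q. k x) =
        (LINT x:\<pi> -` A \<inter> space Q|Q. k x) + (LINT x:\<pi> -` B \<inter> space Q|Q. k x)"
      using AB by (simp add: set_integral_Un int pre disjoint_iff)
  next
    fix e :: real assume "0 < e"
    then obtain d where d: "0 < d"
      "\<forall>E\<in>sets P. measure P E < d \<longrightarrow> (LINT x:\<pi> -` E \<inter> space Q|Q. \<bar>k x\<bar>) < e"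
      using set_integral_preimage_abs_less[OF assms] by blast
    have "\<bar>LINT x:\<pi> -` E \<inter> space Q|Q. k x\<bar> \<le> (LINT x:\<pi> -` E \<inter> space Q|Q. \<bar>k x\<bar>)"
      if "E \<in> sets P" for E
      using set_integral_norm_bound[OF int[OF pre[OF that]]] by simp
    then show "\<exists>d>0. \<forall>E\<in>sets P. measure P E < d \<longrightarrow> \<bar>LINT x:\<pi> -` E \<inter> space Q|Q. k x\<bar> < e"
      using d by (intro exI[of _ d]) force
  }
qed

section \<open>Strong duality for constrained learning\<close>

lemma risk_if_split:
  assumes "integrable D (\<lambda>p. l (f (fst p)) (snd p))" "integrable D (\<lambda>p. l (g (fst p)) (snd p))"
    and "fst -` E \<inter> space D \<in> sets D"
  shows "risk D l (\<lambda>x. if x \<in> E then f x else g x) =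
    risk D l g + (LINT p:fst -` E \<inter> space D|D. l (f (fst p)) (snd p) - l (g (fst p)) (snd p))"
proof -
  have "risk D l (\<lambda>x. if x \<in> E then f x else g x) = (\<integral>p. l (g (fst p)) (snd p) +
      indicator (fst -` E \<inter> space D) p *\<^sub>R (l (f (fst p)) (snd p) - l (g (fst p)) (snd p)) \<partial>D)"
    unfolding risk_def by (rule Bochner_Integration.integral_cong) (auto simp: indicator_def)
  also have "\<dots> = risk D l g +
      (LINT p:fst -` E \<inter> space D|D. l (f (fst p)) (snd p) - l (g (fst p)) (snd p))"
    unfolding risk_def set_lebesgue_integral_def using assms
    by (intro Bochner_Integration.integral_add integrable_mult_indicator
        Bochner_Integration.integrable_diff)
  finally show ?thesis .
qed

lemma measurable_fst_sets_borel:
  "sets D = sets (borel :: ('a::topological_space \<times> 'b::topological_space) measure) \<Longrightarrow>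
    fst \<in> measurable D borel"
  using measurable_cong_sets[of D borel borel borel]
    borel_measurable_continuous_onI[OF continuous_on_fst[OF continuous_on_id]] by blast

lemma abs_cont_charge_loss_difference:
  fixes D :: "('a::topological_space \<times> real) measure"
  assumes P: "finite_measure P" "sets P = sets borel" and sets_D: "sets D = sets borel"
    and ac: "absolutely_continuous P (marginal_X D)"
    and "integrable D (\<lambda>p. l (f (fst p)) (snd p))" "integrable D (\<lambda>p. l (g (fst p)) (snd p))"
  shows "abs_cont_charge P
    (\<lambda>E. LINT p:fst -` E \<inter> space D|D. l (f (fst p)) (snd p) - l (g (fst p)) (snd p))"
  using P measurable_fst_sets_borel[OF sets_D] ac[unfolded marginal_X_def] assms(5,6)
  by (intro abs_cont_charge_set_integral_preimage Bochner_Integration.integrable_diff)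

text \<open>Splitting the feature space between f and g along an event on which every risk
  difference takes the fraction t of its total value, as provided by Lyapunov's theorem.\<close>
lemma decomposable_risk_interpolation:
  fixes D :: "nat \<Rightarrow> ('a::topological_space \<times> real) measure"
  assumes prob: "\<And>i. i \<le> m \<Longrightarrow> prob_space (D i)"
    and sets_D: "\<And>i. i \<le> m \<Longrightarrow> sets (D i) = sets borel"
    and nonatom: "nonatomic (marginal_X (D 0))"
    and abs_cont: "\<And>i. i \<in> {1..m} \<Longrightarrow> absolutely_continuous (marginal_X (D 0)) (marginal_X (D i))"
    and integr: "\<And>f i. f \<in> F \<Longrightarrow> i \<le> m \<Longrightarrow> integrable (D i) (\<lambda>p. l i (f (fst p)) (snd p))"
    and decomp: "decomposable F" and fg: "f \<in> F" "g \<in> F" and t: "0 \<le> t" "t \<le> 1"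
  shows "\<exists>h\<in>F. \<forall>i\<le>m. risk (D i) (l i) h = t * risk (D i) (l i) f + (1 - t) * risk (D i) (l i) g"
proof -
  define P where "P = marginal_X (D 0)"
  interpret P: prob_space P
    unfolding P_def marginal_X_def
    by (rule prob_space.prob_space_distr[OF prob measurable_fst_sets_borel[OF sets_D]]) auto
  have sets_P: "sets P = sets borel" and space_P: "space P = UNIV"
    unfolding P_def marginal_X_def by simp_all
  define \<nu> where "\<nu> i E = (LINT p:fst -` E \<inter> space (D i)|D i.
      l i (f (fst p)) (snd p) - l i (g (fst p)) (snd p))" for i E
  have "abs_cont_charge P (\<nu> i)" if "i \<le> m" for i
    unfolding \<nu>_def
  proof (rule abs_cont_charge_loss_difference[OF P.finite_measure_axioms sets_P sets_D[OF that]])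
    show "absolutely_continuous P (marginal_X (D i))"
      using abs_cont[of i] that unfolding P_def absolutely_continuous_def by (cases "i = 0") auto
  qed (use integr fg that in auto)
  then obtain E where E: "E \<in> sets P" "\<forall>\<mu>\<in>\<nu> ` {..m}. \<mu> E = t * \<mu> (space P)"
    using P.lyapunov_convexity[OF nonatom[folded P_def], of "\<nu> ` {..m}" t] t by auto
  define h where "h x = (if x \<in> E then f x else g x)" for x
  have "risk (D i) (l i) h = t * risk (D i) (l i) f + (1 - t) * risk (D i) (l i) g"
    if i: "i \<le> m" for i
  proof -
    have int: "integrable (D i) (\<lambda>p. l i (f (fst p)) (snd p))"
      "integrable (D i) (\<lambda>p. l i (g (fst p)) (snd p))"
      using integr fg i by auto
    have "fst -` E \<inter> space (D i) \<in> sets (D i)"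
      using measurable_sets[OF measurable_fst_sets_borel[OF sets_D[OF i]]] E(1) sets_P by auto
    then have "risk (D i) (l i) h = risk (D i) (l i) g + \<nu> i E"
      unfolding h_def \<nu>_def by (rule risk_if_split[OF int])
    moreover have "\<nu> i (space P) = risk (D i) (l i) f - risk (D i) (l i) g"
    proof -
      have space_D: "space (D i) = UNIV" using sets_eq_imp_space_eq[OF sets_D[OF i]] by simp
      show ?thesis
        unfolding \<nu>_def space_P using int by (simp add: space_D[symmetric] set_integral_space risk_def)
    qed
    ultimately have "risk (D i) (l i) h =
        risk (D i) (l i) g + t * (risk (D i) (l i) f - risk (D i) (l i) g)"
      using E(2) i by simp
    then show ?thesis by (simp add: algebra_simps)
  qed
  moreover have "h \<in> F" using decomp fg E(1) sets_P unfolding decomposable_def h_def by auto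
  ultimately show ?thesis by blast
qed

lemma decomposable_risk_convexlike:
  fixes D :: "nat \<Rightarrow> ('a::topological_space \<times> real) measure"
  assumes prob: "\<And>i. i \<le> m \<Longrightarrow> prob_space (D i)"
    and sets_D: "\<And>i. i \<le> m \<Longrightarrow> sets (D i) = sets borel"
    and nonatom: "nonatomic (marginal_X (D 0))"
    and abs_cont: "\<And>i. i \<in> {1..m} \<Longrightarrow> absolutely_continuous (marginal_X (D 0)) (marginal_X (D i))"
    and integr: "\<And>f i. f \<in> F \<Longrightarrow> i \<le> m \<Longrightarrow> integrable (D i) (\<lambda>p. l i (f (fst p)) (snd p))"
    and decomp: "decomposable F"
  shows "convexlike {..m} ((\<lambda>f i. risk (D i) (l i) f) ` F)"
  unfolding convexlike_def
proof (intro ballI allI impI)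
  fix v w and t :: real
  assume "v \<in> (\<lambda>f i. risk (D i) (l i) f) ` F" "w \<in> (\<lambda>f i. risk (D i) (l i) f) ` F"
    and t: "0 \<le> t" "t \<le> 1"
  then obtain f g where fg: "f \<in> F" "g \<in> F"
    and vw: "v = (\<lambda>i. risk (D i) (l i) f)" "w = (\<lambda>i. risk (D i) (l i) g)"
    by blast
  obtain h where "h \<in> F"
    "\<forall>i\<le>m. risk (D i) (l i) h = t * risk (D i) (l i) f + (1 - t) * risk (D i) (l i) g"
    using decomposable_risk_interpolation[where D = D and l = l and F = F,
        OF prob sets_D nonatom abs_cont integr decomp fg t]
    by blast
  then show "\<exists>u\<in>(\<lambda>f i. risk (D i) (l i) f) ` F. \<forall>i\<in>{..m}. u i \<le> t * v i + (1 - t) * w i"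
    unfolding vw by (intro bexI[of _ "\<lambda>i. risk (D i) (l i) h"]) auto
qed

lemma primal_value_le:
  assumes nonneg: "\<And>f. f \<in> F \<Longrightarrow> 0 \<le> risk (D 0) (l 0) f"
    and f: "f \<in> F" "\<forall>i\<in>{1..m}. risk (D i) (l i) f \<le> c i"
  shows "primal_value m D l c F \<le> risk (D 0) (l 0) f"
  unfolding primal_value_def
proof (rule cInf_lower)
  show "bdd_below {risk (D 0) (l 0) f | f. f \<in> F \<and> (\<forall>i\<in>{1..m}. risk (D i) (l i) f \<le> c i)}"
    using nonneg by (intro bdd_belowI[of _ 0]) auto
qed (use f in blast)

lemma dual_function_le_primal_value:
  assumes nonneg: "\<And>f i. f \<in> F \<Longrightarrow> i \<le> m \<Longrightarrow> 0 \<le> risk (D i) (l i) f"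
    and feasible: "\<exists>f\<in>F. \<forall>i\<in>{1..m}. risk (D i) (l i) f \<le> c i"
    and lam: "\<forall>i\<in>{1..m}. 0 \<le> lam i"
  shows "dual_function m D l c F lam \<le> primal_value m D l c F"
proof -
  have "bdd_below {lagrangian m D l c f lam | f. f \<in> F}"
  proof (rule bdd_belowI)
    fix x assume "x \<in> {lagrangian m D l c f lam | f. f \<in> F}"
    then obtain f where f: "f \<in> F" "x = lagrangian m D l c f lam" by blast
    have "(\<Sum>i=1..m. lam i * (0 - c i)) \<le> (\<Sum>i=1..m. lam i * (risk (D i) (l i) f - c i))"
      using lam nonneg f(1) by (intro sum_mono mult_left_mono) auto
    also have "\<dots> \<le> x" using f nonneg[of f 0] unfolding lagrangian_def by simp
    finally show "(\<Sum>i=1..m. lam i * (0 - c i)) \<le> x" .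
  qed
  then have "dual_function m D l c F lam \<le> risk (D 0) (l 0) f"
    if "f \<in> F" "\<forall>i\<in>{1..m}. risk (D i) (l i) f \<le> c i" for f
  proof -
    have "dual_function m D l c F lam \<le> lagrangian m D l c f lam"
      unfolding dual_function_def using \<open>bdd_below _\<close> that(1) by (intro cInf_lower) auto
    also have "\<dots> \<le> risk (D 0) (l 0) f"
    proof -
      have "(\<Sum>i=1..m. lam i * (risk (D i) (l i) f - c i)) \<le> 0"
        using lam that by (intro sum_nonpos mult_nonneg_nonpos) auto
      then show ?thesis unfolding lagrangian_def by simp
    qed
    finally show ?thesis .
  qed
  then show ?thesis
    unfolding primal_value_def using feasible by (intro cInf_greatest) auto
qed

lemma strong_duality_of_multiplier:
  assumes nonneg: "\<And>f i. f \<in> F \<Longrightarrow> i \<le> m \<Longrightarrow> 0 \<le> risk (D i) (l i) f"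
    and feasible: "\<exists>f\<in>F. \<forall>i\<in>{1..m}. risk (D i) (l i) f \<le> c i"
    and lam: "\<forall>i\<in>{1..m}. 0 \<le> lam i"
    and lagrangian_ge: "\<forall>f\<in>F. primal_value m D l c F \<le> lagrangian m D l c f lam"
  shows "primal_value m D l c F = dual_value m D l c F \<and>
    dual_function m D l c F lam = dual_value m D l c F"
proof -
  have weak: "dual_function m D l c F lam' \<le> primal_value m D l c F"
    if "\<forall>i\<in>{1..m}. 0 \<le> lam' i" for lam'
    using dual_function_le_primal_value[OF nonneg feasible that] by blast
  have "primal_value m D l c F \<le> dual_function m D l c F lam"
    unfolding dual_function_def using feasible lagrangian_ge by (intro cInf_greatest) auto
  then have lam_opt: "dual_function m D l c F lam = primal_value m D l c F"
    using weak[OF lam] by linarith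
  have "dual_value m D l c F = primal_value m D l c F"
    unfolding dual_value_def
  proof (rule cSup_eq_maximum)
    show "primal_value m D l c F \<in> {dual_function m D l c F lam | lam. \<forall>i\<in>{1..m}. 0 \<le> lam i}"
      using lam_opt lam by force
  qed (use weak in blast)
  with lam_opt show ?thesis by simp
qed

lemma lagrange_multiplier_of_convexlike_risks:
  assumes nonneg: "\<And>f. f \<in> F \<Longrightarrow> 0 \<le> risk (D 0) (l 0) f"
    and convex: "convexlike {..m} ((\<lambda>f i. risk (D i) (l i) f) ` F)"
    and slater: "\<exists>f\<in>F. \<forall>i\<in>{1..m}. risk (D i) (l i) f < c i"
  shows "\<exists>lam. (\<forall>i\<in>{1..m}. 0 \<le> lam i) \<and>
    (\<forall>f\<in>F. primal_value m D l c F \<le> lagrangian m D l c f lam)"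
proof -
  let ?S = "(\<lambda>f i. risk (D i) (l i) f) ` F"
  obtain fs where "fs \<in> F" "\<forall>i\<in>{1..m}. risk (D i) (l i) fs < c i"
    using slater by blast
  then have strictly_feasible: "\<exists>s\<in>?S. \<forall>i\<in>{1..m}. s i < c i"
    by (intro bexI[of _ "\<lambda>i. risk (D i) (l i) fs"] imageI) simp_all
  have lower: "\<forall>v\<in>?S. (\<forall>i\<in>{1..m}. v i \<le> c i) \<longrightarrow> primal_value m D l c F \<le> v 0"
  proof (intro ballI impI)
    fix v assume v: "v \<in> ?S" and feas: "\<forall>i\<in>{1..m}. v i \<le> c i"
    obtain f where "f \<in> F" "v = (\<lambda>i. risk (D i) (l i) f)" using v by blast
    then show "primal_value m D l c F \<le> v 0" using feas primal_value_le[of F D l] nonneg by simp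
  qed
  obtain lam where lam: "\<forall>i\<in>{1..m}. 0 \<le> lam i"
    and "\<forall>v\<in>?S. primal_value m D l c F \<le> v 0 + (\<Sum>i=1..m. lam i * (v i - c i))"
    using convexlike_lagrange_multipliers[OF convex strictly_feasible lower] by blast
  then show ?thesis unfolding lagrangian_def by auto
qed

theorem mainTheorem3:
  fixes m :: nat
    and D :: "nat \<Rightarrow> ((real ^ 'd) \<times> real) measure"
    and l :: "nat \<Rightarrow> real ^ 'k \<Rightarrow> real \<Rightarrow> real"
    and c :: "nat \<Rightarrow> real"
    and F :: "(real ^ 'd \<Rightarrow> real ^ 'k) set"
  assumes prob: "\<And>i. i \<le> m \<Longrightarrow> prob_space (D i)"
    and sets_D: "\<And>i. i \<le> m \<Longrightarrow> sets (D i) = sets borel"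
    and loss_meas: "\<And>i. i \<le> m \<Longrightarrow> (\<lambda>p. l i (fst p) (snd p)) \<in> borel_measurable borel"
    and loss_nonneg: "\<And>i v y. i \<le> m \<Longrightarrow> 0 \<le> l i v y"
    and F_meas: "\<And>f. f \<in> F \<Longrightarrow> f \<in> borel_measurable borel"
    and nonatom: "nonatomic (marginal_X (D 0))"
    and abs_cont: "\<And>i. i \<in> {1..m} \<Longrightarrow> absolutely_continuous (marginal_X (D 0)) (marginal_X (D i))"
    and integr: "\<And>f i. f \<in> F \<Longrightarrow> i \<le> m \<Longrightarrow> integrable (D i) (\<lambda>p. l i (f (fst p)) (snd p))"
    and decomp: "decomposable F"
    and slater: "\<exists>f\<in>F. \<forall>i\<in>{1..m}. risk (D i) (l i) f < c i"
  shows "primal_value m D l c F = dual_value m D l c F \<and>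
         (\<exists>lam. (\<forall>i\<in>{1..m}. 0 \<le> lam i) \<and> dual_function m D l c F lam = dual_value m D l c F)"
proof -
  have nonneg: "0 \<le> risk (D i) (l i) f" if "i \<le> m" for f i
    unfolding risk_def using loss_nonneg[OF that] by (intro Bochner_Integration.integral_nonneg) auto
  have feasible: "\<exists>f\<in>F. \<forall>i\<in>{1..m}. risk (D i) (l i) f \<le> c i"
    using slater by (meson less_imp_le)
  have "convexlike {..m} ((\<lambda>f i. risk (D i) (l i) f) ` F)"
    using prob sets_D nonatom abs_cont integr decomp by (rule decomposable_risk_convexlike)
  then obtain lam where lam: "\<forall>i\<in>{1..m}. 0 \<le> lam i"
    and "\<forall>f\<in>F. primal_value m D l c F \<le> lagrangian m D l c f lam"
    using lagrange_multiplier_of_convexlike_risks[OF nonneg _ slater] by blast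
  then show ?thesis
    using strong_duality_of_multiplier[OF nonneg feasible lam] lam by blast
qed

end
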